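(* Let $k\ge1$, let $(\mathcal X,\mathcal I)$ be a set system with $n$ items and $m$ sets, let $\hat{\mathcal I}=\{\hat S\}_{S\in\mathcal I}$ be produced by the greedy partition procedure described in the context, and let $Q\subseteq\mathcal X$. Let $S_1,\dots,S_k\in\mathcal I$ be sets such that $\hat S_1,\dots,\hat S_k$ maximize $|(\bigcup_{i=1}^k\hat S_i)\cap Q|$ over all choices of $k$ members of $\hat{\mathcal I}$. Then for every $S_1^*,\dots,S_k^*\in\mathcal I$, $$\Big|\Big(\bigcup_{i=1}^k S_i\Big)\cap Q\Big|\ \ge\ \frac{|(\bigcup_{i=1}^k S_i^* )\cap Q|}{O(\sqrt{n/k})}.$$
   Context: A set system with $n$ items and $m$ sets is a pair $(\mathcal X,\mathcal I)$ with $\mathcal X=\{1,\dots,n\}$ and $\mathcal I$ an indexed family of $m$ subsets of $\mathcal X$. Greedy partition procedure: initially all items are "uncovered" and all sets "unchosen"; while there are unchosen sets, pick the unchosen $S\in\mathcal I$ containing the most uncovered items, let $\hat S$ be the set of uncovered items of $S$, mark them "covered", and mark $S$ "chosen". Thus $\{\hat S\}$ partitions $\bigcup_{S\in\mathcal I}S$. *)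

theory Defs
  imports Complex_Main
begin

text \<open>A set system with items {1..n} and m sets is given by an indexed family
  S :: nat \<Rightarrow> nat set, the sets being S 0, ..., S (m-1), each a subset of {1..n}.\<close>

definition set_system :: "nat \<Rightarrow> nat \<Rightarrow> (nat \<Rightarrow> nat set) \<Rightarrow> bool" where
  "set_system n m S \<longleftrightarrow> (\<forall>j<m. S j \<subseteq> {1..n})"

definition covered :: "(nat \<Rightarrow> nat set) \<Rightarrow> nat list \<Rightarrow> nat set" where
  "covered S ys = (\<Union>i\<in>set ys. S i)"

text \<open>A run of the greedy partition procedure: the order in which the sets are chosen.
  At step t, the chosen set contains the most uncovered items among the unchosen sets
  (ties broken arbitrarily).\<close>
definition greedy_order :: "nat \<Rightarrow> (nat \<Rightarrow> nat set) \<Rightarrow> nat list \<Rightarrow> bool" where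
  "greedy_order m S ord \<longleftrightarrow> distinct ord \<and> set ord = {..<m} \<and>
     (\<forall>t<m. \<forall>j\<in>{..<m} - set (take t ord).
        card (S j - covered S (take t ord)) \<le> card (S (ord ! t) - covered S (take t ord)))"

text \<open>The part \<open>\<hat>S\<close> of set j: its items that were uncovered when j was chosen.\<close>
definition hat :: "(nat \<Rightarrow> nat set) \<Rightarrow> nat list \<Rightarrow> nat \<Rightarrow> nat set" where
  "hat S ord j = S j - covered S (takeWhile (\<lambda>i. i \<noteq> j) ord)"

end

theory Submission
  imports Defs "HOL-Library.Disjoint_Sets" "HOL-Analysis.Convex"
begin

(* Let part t be the t-th piece of the greedy partition, H a bound on the Q-coverage of
   any k pieces, and U the set of items of Q lying in arbitrary sets S*_1, ..., S*_k.
   Each item e of U lies in the piece part (first_cover e) in which it gets covered.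
   - Heavy items, whose piece holds more than H/k items of Q: there are at most k heavy
     pieces, so together they hold at most H items of Q (heavy_indices, heavy_items).
   - Light items: split them into classes A_i by the first S*_i containing them.  By the
     greedy choice, the j-th last item of A_i in covering order lies in a piece of size
     at least j, so |A_i|(|A_i|+1)/2 is at most the total piece size over A_i
     (triangular_bound).  Double counting over light pieces (weighted_fibre_bound)
     bounds the sum of these piece sizes by nH/k; with Cauchy-Schwarz this gives
     |light items|^2 <= 2nH (light_items_square), i.e. at most 2 sqrt(n/k) H of them. *)

lemma rank_sum:
  fixes f :: "'a \<Rightarrow> nat"
  assumes "finite A"
  shows "card A * (card A + 1) \<le> 2 * (\<Sum>e\<in>A. card {e'\<in>A. f e \<le> f e'})"
  using assms
proof (induction "card A" arbitrary: A)
  case 0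
  then show ?case by simp
next
  case (Suc c)
  then have "A \<noteq> {}" by auto
  then have "Min (f ` A) \<in> f ` A" using Suc.prems by simp
  then obtain e0 where e0: "e0 \<in> A" "f e0 = Min (f ` A)" by auto
  then have e0_min: "\<forall>e\<in>A. f e0 \<le> f e" using Suc.prems by simp
  define B where "B = A - {e0}"
  have B: "finite B" "card B = c" and A: "A = insert e0 B" "e0 \<notin> B"
    using Suc B_def e0 by auto
  have IH: "card B * (card B + 1) \<le> 2 * (\<Sum>e\<in>B. card {e'\<in>B. f e \<le> f e'})"
    using Suc.hyps(1)[of B] B by simp
  have "(\<Sum>e\<in>A. card {e'\<in>A. f e \<le> f e'})
      = card {e'\<in>A. f e0 \<le> f e'} + (\<Sum>e\<in>B. card {e'\<in>A. f e \<le> f e'})"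
    using A B by simp
  moreover have "{e'\<in>A. f e0 \<le> f e'} = A" using e0_min by auto
  moreover have "(\<Sum>e\<in>B. card {e'\<in>B. f e \<le> f e'}) \<le> (\<Sum>e\<in>B. card {e'\<in>A. f e \<le> f e'})"
    by (intro sum_mono card_mono) (use Suc.prems A in auto)
  ultimately have "(\<Sum>e\<in>B. card {e'\<in>B. f e \<le> f e'}) + card A
      \<le> (\<Sum>e\<in>A. card {e'\<in>A. f e \<le> f e'})"
    by simp
  moreover have "card A = Suc c" using Suc.hyps(2) by simp
  ultimately show ?case using IH B by (simp add: algebra_simps)
qed

lemma heavy_indices:
  fixes w :: "'a \<Rightarrow> nat"
  assumes "finite T" and bound: "\<And>J. J \<subseteq> T \<Longrightarrow> card J \<le> k \<Longrightarrow> sum w J \<le> H"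
  defines "B \<equiv> {t\<in>T. H < k * w t}"
  shows "card B \<le> k" and "sum w B \<le> H"
proof -
  show card_B: "card B \<le> k"
  proof (rule ccontr)
    assume "\<not> card B \<le> k"
    then obtain J where J: "J \<subseteq> B" "card J = k" by (meson obtain_subset_with_card_n nat_le_linear)
    have "J \<noteq> {}" using J \<open>\<not> card B \<le> k\<close> by (auto simp: B_def)
    moreover have "finite J" using J \<open>finite T\<close> by (metis B_def finite_subset mem_Collect_eq subsetI)
    ultimately have "(\<Sum>t\<in>J. H) < (\<Sum>t\<in>J. k * w t)"
      using J by (intro sum_strict_mono) (auto simp: B_def)
    then have "k * H < k * sum w J" using J by (simp add: sum_distrib_left)
    moreover have "sum w J \<le> H" using bound J by (auto simp: B_def)
    ultimately show False by (meson leD mult_le_mono2)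
  qed
  then show "sum w B \<le> H" using bound by (simp add: B_def)
qed

lemma weighted_fibre_bound:
  fixes g :: "'a \<Rightarrow> 'b" and c :: "'b \<Rightarrow> nat"
  assumes "finite E" "finite T" "g ` E \<subseteq> T"
    and fibre: "\<And>e. e \<in> E \<Longrightarrow> k * card {e'\<in>E. g e' = g e} \<le> H"
  shows "k * (\<Sum>e\<in>E. c (g e)) \<le> H * (\<Sum>t\<in>T. c t)"
proof -
  have fibre_t: "k * card {e\<in>E. g e = t} \<le> H" for t
  proof (cases "{e\<in>E. g e = t} = {}")
    case False
    then obtain e where "e \<in> E" "g e = t" by blast
    then show ?thesis using fibre[of e] by simp
  qed (metis card.empty mult_0_right zero_le)
  have "(\<Sum>e\<in>E. c (g e)) = (\<Sum>t\<in>T. \<Sum>e\<in>{e\<in>E. g e = t}. c (g e))"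
    by (rule sum.group[symmetric]) (use assms in auto)
  also have "\<dots> = (\<Sum>t\<in>T. c t * card {e\<in>E. g e = t})"
    by (intro sum.cong) auto
  finally have "k * (\<Sum>e\<in>E. c (g e)) = (\<Sum>t\<in>T. c t * (k * card {e\<in>E. g e = t}))"
    by (simp add: sum_distrib_left algebra_simps)
  also have "\<dots> \<le> (\<Sum>t\<in>T. c t * H)"
    by (intro sum_mono mult_le_mono2 fibre_t)
  finally show ?thesis by (simp add: sum_distrib_left mult.commute)
qed

lemma square_root_bound:
  fixes s n k H :: nat
  assumes "s\<^sup>2 \<le> 2 * n * H" "1 \<le> k" "k \<le> H"
  shows "real s \<le> 2 * max 1 (sqrt (real n / real k)) * real H"
proof -
  define M where "M = max 1 (sqrt (real n / real k))"
  have "real n / real k \<le> M\<^sup>2"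
    by (cases "real n / real k \<le> 1") (auto simp: M_def max_def power2_eq_square)
  then have n_le: "real n \<le> M\<^sup>2 * real k" using assms(2) by (simp add: field_simps)
  have "(real s)\<^sup>2 \<le> 2 * real n * real H"
    using assms(1) by (metis of_nat_le_iff of_nat_mult of_nat_numeral of_nat_power)
  also have "\<dots> \<le> 2 * (M\<^sup>2 * real k) * real H" using n_le by (simp add: mult_right_mono)
  also have "\<dots> \<le> 2 * (M\<^sup>2 * real H) * real H"
    using assms(3) by (intro mult_right_mono mult_left_mono) auto
  also have "\<dots> \<le> (2 * M * real H)\<^sup>2"
    using zero_le_power2[of "M * real H"] by (simp add: power2_eq_square algebra_simps)
  finally show ?thesis unfolding M_def[symmetric]
    by (rule power2_le_imp_le) (simp add: M_def)
qed

lemma image_lessThan_onto: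
  assumes "finite J" "J \<noteq> {}" "card J \<le> k"
  obtains f :: "nat \<Rightarrow> 'a" where "f ` {..<k} = J"
proof -
  obtain h where h: "bij_betw h {0..<card J} J" using ex_bij_betw_nat_finite[OF assms(1)] by blast
  have pos: "card J > 0" using assms by auto
  define f where "f i = h (min i (card J - 1))" for i
  have "f ` {..<k} = h ` {0..<card J}"
  proof
    show "f ` {..<k} \<subseteq> h ` {0..<card J}" using pos by (auto simp: f_def)
    show "h ` {0..<card J} \<subseteq> f ` {..<k}"
    proof
      fix x assume "x \<in> h ` {0..<card J}"
      then obtain i where "i < card J" "x = h i" by auto
      then show "x \<in> f ` {..<k}" using assms(3) by (auto simp: f_def image_iff intro!: bexI[of _ i])
    qed
  qed
  then show ?thesis using h that by (simp add: bij_betw_def)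
qed

section \<open>A run of the greedy partition procedure\<close>

locale greedy_partition =
  fixes n m :: nat and S :: "nat \<Rightarrow> nat set" and ord :: "nat list"
  assumes system: "set_system n m S" and greedy: "greedy_order m S ord"
begin

definition part :: "nat \<Rightarrow> nat set" where
  "part t = S (ord ! t) - covered S (take t ord)"

definition first_cover :: "nat \<Rightarrow> nat" where
  "first_cover e = (LEAST t. e \<in> S (ord ! t))"

lemma distinct_ord: "distinct ord" and set_ord: "set ord = {..<m}"
  using greedy by (auto simp: greedy_order_def)

lemma length_ord: "length ord = m"
  using distinct_card[OF distinct_ord] set_ord by simp

lemma ord_less: "t < m \<Longrightarrow> ord ! t < m"
  using set_ord length_ord nth_mem by fastforce

lemma finite_S: "j < m \<Longrightarrow> finite (S j)"
  using system finite_subset[of "S j" "{1..n}"] by (auto simp: set_system_def)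

lemma covered_take: "t \<le> m \<Longrightarrow> covered S (take t ord) = (\<Union>t'<t. S (ord ! t'))"
proof -
  assume "t \<le> m"
  then have "take t ord = map (\<lambda>i. ord ! i) [0..<t]"
    using length_ord by (intro nth_equalityI) auto
  then have "set (take t ord) = (\<lambda>i. ord ! i) ` {..<t}"
    by (simp add: atLeast0LessThan)
  then show ?thesis by (simp add: covered_def)
qed

lemma hat_nth: "t < m \<Longrightarrow> hat S ord (ord ! t) = part t"
proof -
  assume t: "t < m"
  have "takeWhile (\<lambda>i. i \<noteq> ord ! t) ord = take t ord"
    using t distinct_ord length_ord
    by (intro takeWhile_eq_take_P_nth) (auto simp: nth_eq_iff_index_eq)
  then show ?thesis by (simp add: hat_def part_def)
qed

lemma hat_subset: "hat S ord j \<subseteq> S j"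
  by (auto simp: hat_def)

lemma part_disjoint: "t1 < m \<Longrightarrow> t2 < m \<Longrightarrow> t1 \<noteq> t2 \<Longrightarrow> part t1 \<inter> part t2 = {}"
proof -
  have *: "part a \<inter> part b = {}" if "a < b" "b < m" for a b
    using that covered_take[of b] by (auto simp: part_def)
  assume "t1 < m" "t2 < m" "t1 \<noteq> t2"
  then show ?thesis using *[of t1 t2] *[of t2 t1] by (cases "t1 < t2") auto
qed

lemma part_subset: "t < m \<Longrightarrow> part t \<subseteq> {1..n}"
  using system ord_less by (auto simp: part_def set_system_def)

lemma finite_part: "t < m \<Longrightarrow> finite (part t)"
  using part_subset finite_subset by blast

text \<open>The pieces are disjoint subsets of the n items.\<close>
lemma sum_card_part: "(\<Sum>t<m. card (part t)) \<le> n"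
proof -
  have "(\<Sum>t<m. card (part t)) = card (\<Union>t<m. part t)"
    by (rule card_UN_disjoint[symmetric]) (auto intro: finite_part dest: part_disjoint)
  also have "\<dots> \<le> card {1..n}"
    by (intro card_mono) (use part_subset in auto)
  finally show ?thesis by simp
qed

text \<open>Disjointness makes the Q-coverage of a collection of pieces additive.\<close>
lemma card_Union_part:
  assumes "J \<subseteq> {..<m}"
  shows "card ((\<Union>t\<in>J. part t) \<inter> Q) = (\<Sum>t\<in>J. card (part t \<inter> Q))"
proof -
  have "finite J" using assms finite_subset by blast
  have "(\<Union>t\<in>J. part t) \<inter> Q = (\<Union>t\<in>J. part t \<inter> Q)" by blast
  moreover have "card (\<Union>t\<in>J. part t \<inter> Q) = (\<Sum>t\<in>J. card (part t \<inter> Q))"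
  proof (rule card_UN_disjoint[OF \<open>finite J\<close>])
    show "\<forall>t\<in>J. finite (part t \<inter> Q)" using assms finite_part by blast
    show "\<forall>t\<in>J. \<forall>j\<in>J. t \<noteq> j \<longrightarrow> part t \<inter> Q \<inter> (part j \<inter> Q) = {}"
      using assms part_disjoint by blast
  qed
  ultimately show ?thesis by simp
qed

lemma greedy_choice:
  assumes "t < m" "j < m" "j \<notin> set (take t ord)"
  shows "card (S j - covered S (take t ord)) \<le> card (part t)"
  using greedy assms unfolding greedy_order_def part_def by blast

lemma first_cover:
  assumes "e \<in> S j" "j < m"
  shows "first_cover e < m" "e \<in> part (first_cover e)"
    and "\<And>t. t \<le> first_cover e \<Longrightarrow> e \<notin> covered S (take t ord)"
proof -
  obtain t0 where t0: "t0 < m" "ord ! t0 = j"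
    using assms(2) set_ord length_ord by (metis in_set_conv_nth lessThan_iff)
  then have "e \<in> S (ord ! t0)" using assms by simp
  then have le: "first_cover e \<le> t0" and in_S: "e \<in> S (ord ! first_cover e)"
    unfolding first_cover_def by (auto intro: Least_le LeastI)
  then show less: "first_cover e < m" using t0 by linarith
  have "e \<notin> S (ord ! t')" if "t' < first_cover e" for t'
    using not_less_Least[of t' "\<lambda>t. e \<in> S (ord ! t)"] that unfolding first_cover_def by blast
  then show uncovered: "e \<notin> covered S (take t ord)" if "t \<le> first_cover e" for t
    using that less covered_take[of t] by auto
  show "e \<in> part (first_cover e)" using in_S uncovered[of "first_cover e"] by (simp add: part_def)
qed

text \<open>When e is covered,
  all items of A covered no earlier are still uncovered in S j, so the piece of e is at
  least as large as their number.\<close>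
lemma triangular_bound:
  assumes "j < m" "A \<subseteq> S j"
  shows "card A * (card A + 1) \<le> 2 * (\<Sum>e\<in>A. card (part (first_cover e)))"
proof -
  have "finite A" using assms finite_S finite_subset by blast
  have "card {e'\<in>A. first_cover e \<le> first_cover e'} \<le> card (part (first_cover e))"
    if e: "e \<in> A" for e
  proof -
    let ?C = "covered S (take (first_cover e) ord)"
    have eS: "e \<in> S j" using e assms by blast
    have "{e'\<in>A. first_cover e \<le> first_cover e'} \<subseteq> S j - ?C"
      using assms first_cover(3)[OF _ assms(1)] by blast
    then have "card {e'\<in>A. first_cover e \<le> first_cover e'} \<le> card (S j - ?C)"
      using finite_S[OF assms(1)] by (intro card_mono) auto
    also have "\<dots> \<le> card (part (first_cover e))"
      using first_cover[OF eS assms(1)] eS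
      by (intro greedy_choice assms(1)) (auto simp: covered_def)
    finally show ?thesis .
  qed
  then have "(\<Sum>e\<in>A. card {e'\<in>A. first_cover e \<le> first_cover e'})
      \<le> (\<Sum>e\<in>A. card (part (first_cover e)))"
    by (rule sum_mono)
  with rank_sum[OF \<open>finite A\<close>, of first_cover] show ?thesis by linarith
qed

section \<open>Covering arbitrary sets against the best k pieces\<close>

definition k_part_bound :: "nat \<Rightarrow> nat set \<Rightarrow> nat \<Rightarrow> bool" where
  "k_part_bound k Q H \<longleftrightarrow>
     (\<forall>J. J \<subseteq> {..<m} \<longrightarrow> card J \<le> k \<longrightarrow> (\<Sum>t\<in>J. card (part t \<inter> Q)) \<le> H)"

lemma heavy_items:
  assumes "k_part_bound k Q H"
    and heavy: "\<And>e. e \<in> E \<Longrightarrow> H < k * card (part (first_cover e) \<inter> Q)"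
    and first: "\<And>e. e \<in> E \<Longrightarrow> first_cover e < m \<and> e \<in> part (first_cover e) \<inter> Q"
  shows "card E \<le> H"
proof -
  define B where "B = {t\<in>{..<m}. H < k * card (part t \<inter> Q)}"
  have "E \<subseteq> (\<Union>t\<in>B. part t) \<inter> Q" using heavy first by (auto simp: B_def)
  then have "card E \<le> card ((\<Union>t\<in>B. part t) \<inter> Q)"
    using finite_part by (intro card_mono) (auto simp: B_def)
  also have "\<dots> = (\<Sum>t\<in>B. card (part t \<inter> Q))"
    by (rule card_Union_part) (auto simp: B_def)
  also have "\<dots> \<le> H"
    using heavy_indices(2)[of "{..<m}" k "\<lambda>t. card (part t \<inter> Q)" H] assms(1)
    by (simp add: B_def k_part_bound_def)
  finally show ?thesis .
qed

text \<open>Light items of Q are spread thinly: each light piece holds at most H/k of them,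
  so the total size of their pieces is at most nH/k.\<close>
lemma light_piece_weight:
  assumes E: "finite E" "E \<subseteq> Q"
    and first: "\<And>e. e \<in> E \<Longrightarrow> first_cover e < m \<and> e \<in> part (first_cover e)"
    and light: "\<And>e. e \<in> E \<Longrightarrow> k * card (part (first_cover e) \<inter> Q) \<le> H"
  shows "k * (\<Sum>e\<in>E. card (part (first_cover e))) \<le> n * H"
proof -
  have "k * (\<Sum>e\<in>E. card (part (first_cover e))) \<le> H * (\<Sum>t<m. card (part t))"
  proof (rule weighted_fibre_bound[OF E(1) finite_lessThan])
    show "first_cover ` E \<subseteq> {..<m}" using first by auto
    fix e assume e: "e \<in> E"
    have "{e'\<in>E. first_cover e' = first_cover e} \<subseteq> part (first_cover e) \<inter> Q"
    proof
      fix x assume "x \<in> {e'\<in>E. first_cover e' = first_cover e}"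
      then show "x \<in> part (first_cover e) \<inter> Q" using first[of x] E(2) by auto
    qed
    then have "card {e'\<in>E. first_cover e' = first_cover e} \<le> card (part (first_cover e) \<inter> Q)"
      using finite_part first[OF e] by (intro card_mono) auto
    then show "k * card {e'\<in>E. first_cover e' = first_cover e} \<le> H"
      by (rule order_trans[OF mult_le_mono2 light[OF e]])
  qed
  also have "\<dots> \<le> H * n" using sum_card_part by simp
  finally show ?thesis by (simp add: mult.commute)
qed

text \<open>Light items of Q lying in k given sets number at most sqrt(2nH): split them by
  the first of the sets containing them, apply triangular_bound to each class and
  Cauchy-Schwarz to the class sizes.\<close>
lemma light_items_square:
  assumes star: "\<And>i. i < k \<Longrightarrow> star i < m"
    and E: "E \<subseteq> (\<Union>i<k. S (star i)) \<inter> Q"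
    and light: "\<And>e. e \<in> E \<Longrightarrow> k * card (part (first_cover e) \<inter> Q) \<le> H"
  shows "(card E)\<^sup>2 \<le> 2 * n * H"
proof -
  define A where "A i = E \<inter> disjointed (\<lambda>i. S (star i)) i" for i
  define q where "q i = card (A i)" for i
  define W where "W = (\<Sum>e\<in>E. card (part (first_cover e)))"
  have first: "first_cover e < m \<and> e \<in> part (first_cover e)" if "e \<in> E" for e
    using that E star first_cover by blast
  have "finite (\<Union>i<k. S (star i))" using star finite_S by auto
  then have "finite E" using E finite_subset by blast
  then have finite_A: "finite (A i)" for i by (simp add: A_def)
  have "disjoint_family (disjointed (\<lambda>i. S (star i)))" by (rule disjoint_family_disjointed)
  then have disj: "disjoint_family A" unfolding A_def disjoint_family_on_def by blast
  have E_eq: "E = (\<Union>i<k. A i)"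
    using E finite_UN_disjointed_eq[of "\<lambda>i. S (star i)" k] by (auto simp: A_def atLeast0LessThan)
  have sum_q: "card E = (\<Sum>i<k. q i)"
    unfolding E_eq q_def using disj finite_A
    by (intro card_UN_disjoint) (auto simp: disjoint_family_on_def)
  have sum_W: "(\<Sum>i<k. \<Sum>e\<in>A i. card (part (first_cover e))) = W"
    unfolding W_def E_eq using disj finite_A
    by (intro sum.UNION_disjoint[symmetric]) (auto simp: disjoint_family_on_def)
  have "(\<Sum>i<k. (q i)\<^sup>2) \<le> (\<Sum>i<k. q i * (q i + 1))"
    by (intro sum_mono) (simp add: power2_eq_square)
  also have "\<dots> \<le> (\<Sum>i<k. 2 * (\<Sum>e\<in>A i. card (part (first_cover e))))"
    unfolding q_def using star by (intro sum_mono triangular_bound) (auto simp: A_def disjointed_def)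
  also have "\<dots> = 2 * W" by (simp add: sum_distrib_left[symmetric] sum_W)
  finally have "k * (\<Sum>i<k. (q i)\<^sup>2) \<le> 2 * (k * W)" by simp
  also have "\<dots> \<le> 2 * (n * H)"
    unfolding W_def using \<open>finite E\<close> E first light by (intro mult_le_mono2 light_piece_weight[where Q = Q]) auto
  finally have "real (k * (\<Sum>i<k. (q i)\<^sup>2)) \<le> real (2 * n * H)"
    by (simp only: of_nat_le_iff mult.assoc)
  then have sq: "real k * (\<Sum>i<k. (real (q i))\<^sup>2) \<le> real (2 * n * H)" by simp
  have "(real (card E))\<^sup>2 \<le> (\<Sum>i<k. (real (q i))\<^sup>2) * real k"
    using sum_squared_le_sum_of_squares[of "\<lambda>i. real (q i)" "{..<k}"] by (simp add: sum_q)
  with sq have "real ((card E)\<^sup>2) \<le> real (2 * n * H)"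
    unfolding of_nat_power by (simp add: mult.commute[of _ "real k"])
  then show ?thesis by (simp only: of_nat_le_iff)
qed

lemma coverage_bound:
  assumes "1 \<le> k" "k_part_bound k Q H" "\<And>i. i < k \<Longrightarrow> star i < m"
  shows "real (card ((\<Union>i<k. S (star i)) \<inter> Q)) \<le> 3 * max 1 (sqrt (real n / real k)) * real H"
proof -
  define U where "U = (\<Union>i<k. S (star i)) \<inter> Q"
  define M where "M = max 1 (sqrt (real n / real k))"
  define light where "light = {e\<in>U. k * card (part (first_cover e) \<inter> Q) \<le> H}"
  have first: "first_cover e < m \<and> e \<in> part (first_cover e) \<inter> Q" if "e \<in> U" for e
    using that assms(3) first_cover unfolding U_def by blast
  have "U = (U - light) \<union> light" by (auto simp: light_def)
  then have split: "card U \<le> card (U - light) + card light"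
    by (metis card_Un_le)
  have "card (U - light) \<le> H"
    using assms(2) first by (intro heavy_items) (auto simp: light_def not_le)
  moreover have "real (card light) \<le> 2 * M * real H"
  proof (cases "light = {}")
    case False
    then obtain e where e: "e \<in> light" by blast
    then have "1 \<le> card (part (first_cover e) \<inter> Q)"
      using first finite_part by (auto simp: light_def Suc_le_eq card_gt_0_iff)
    then have "k * 1 \<le> k * card (part (first_cover e) \<inter> Q)" by (rule mult_le_mono2)
    moreover have "k * card (part (first_cover e) \<inter> Q) \<le> H" using e by (simp add: light_def)
    ultimately have "k \<le> H" by linarith
    moreover have "(card light)\<^sup>2 \<le> 2 * n * H"
      using assms(3) by (intro light_items_square[where k = k]) (auto simp: light_def U_def)
    ultimately show ?thesis unfolding M_def using square_root_bound assms(1) by blast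
  qed (simp add: M_def)
  moreover have "real H \<le> M * real H" using mult_right_mono[of 1 M "real H"] by (simp add: M_def)
  ultimately show ?thesis using split unfolding U_def[symmetric] M_def[symmetric] by linarith
qed

lemma optimal_k_part_bound:
  assumes "\<forall>idx'. (\<forall>i<k. idx' i < m) \<longrightarrow>
      card ((\<Union>i<k. hat S ord (idx' i)) \<inter> Q) \<le> H"
  shows "k_part_bound k Q H"
  unfolding k_part_bound_def
proof (intro allI impI)
  fix J assume J: "J \<subseteq> {..<m}" "card J \<le> k"
  show "(\<Sum>t\<in>J. card (part t \<inter> Q)) \<le> H"
  proof (cases "J = {}")
    case False
    obtain f where f: "f ` {..<k} = J"
      using image_lessThan_onto[OF _ False J(2)] J(1) finite_subset by blast
    have f_less: "i < k \<Longrightarrow> f i < m" for i using f J(1) by blast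
    have "(\<Union>i<k. hat S ord (ord ! f i)) = (\<Union>i<k. part (f i))"
      using f_less hat_nth by simp
    also have "\<dots> = (\<Union>t\<in>J. part t)" unfolding f[symmetric] by simp
    finally have "(\<Union>i<k. hat S ord (ord ! f i)) = (\<Union>t\<in>J. part t)" .
    moreover have "card ((\<Union>i<k. hat S ord (ord ! f i)) \<inter> Q) \<le> H"
      by (rule assms[rule_format]) (simp add: f_less ord_less)
    ultimately show ?thesis using card_Union_part[OF J(1)] by simp
  qed simp
qed

end

theorem mainTheorem5:
  "\<exists>C>0. \<forall>n m k (S :: nat \<Rightarrow> nat set) ord (Q :: nat set) (idx :: nat \<Rightarrow> nat).
     k \<ge> 1 \<longrightarrow> set_system n m S \<longrightarrow> greedy_order m S ord \<longrightarrow> Q \<subseteq> {1..n} \<longrightarrow>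
     (\<forall>i<k. idx i < m) \<longrightarrow>
     (\<forall>idx'. (\<forall>i<k. idx' i < m) \<longrightarrow>
        card ((\<Union>i<k. hat S ord (idx' i)) \<inter> Q) \<le> card ((\<Union>i<k. hat S ord (idx i)) \<inter> Q)) \<longrightarrow>
     (\<forall>star. (\<forall>i<k. star i < m) \<longrightarrow>
        real (card ((\<Union>i<k. S (star i)) \<inter> Q))
          \<le> C * max 1 (sqrt (real n / real k)) * real (card ((\<Union>i<k. S (idx i)) \<inter> Q)))"
proof (intro exI[of _ 3] conjI allI impI)
  fix n m k :: nat and S :: "nat \<Rightarrow> nat set" and ord Q and idx star :: "nat \<Rightarrow> nat"
  assume k: "k \<ge> 1" and run: "set_system n m S" "greedy_order m S ord" and "Q \<subseteq> {1..n}"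
    and idx: "\<forall>i<k. idx i < m"
    and opt: "\<forall>idx'. (\<forall>i<k. idx' i < m) \<longrightarrow>
        card ((\<Union>i<k. hat S ord (idx' i)) \<inter> Q) \<le> card ((\<Union>i<k. hat S ord (idx i)) \<inter> Q)"
    and star: "\<forall>i<k. star i < m"
  interpret greedy_partition n m S ord using run by unfold_locales
  define H where "H = card ((\<Union>i<k. hat S ord (idx i)) \<inter> Q)"
  define M where "M = max 1 (sqrt (real n / real k))"
  have "finite (\<Union>i<k. S (idx i))" using idx finite_S by auto
  then have H_le: "H \<le> card ((\<Union>i<k. S (idx i)) \<inter> Q)"
    unfolding H_def using hat_subset by (intro card_mono) blast+
  have "k_part_bound k Q H" using opt unfolding H_def by (rule optimal_k_part_bound)
  then have "real (card ((\<Union>i<k. S (star i)) \<inter> Q)) \<le> 3 * M * real H"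
    using k star unfolding M_def by (intro coverage_bound) auto
  also have "\<dots> \<le> 3 * M * real (card ((\<Union>i<k. S (idx i)) \<inter> Q))"
    using H_le by (intro mult_left_mono) (auto simp: M_def)
  finally show "real (card ((\<Union>i<k. S (star i)) \<inter> Q))
      \<le> 3 * max 1 (sqrt (real n / real k)) * real (card ((\<Union>i<k. S (idx i)) \<inter> Q))"
    unfolding M_def .
qed simp

end
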